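(* Let $A$ be a hyperoperator on $\mathbb{R}^n$ on the complex Banach space $X$ and let $(\chi_N)$ be an exhausting sequence in $\mathbb{R}^n$. Then $\bigcup_N \operatorname{Im} A(\chi_N)=D_A$, where $D_A=\bigcup_{\phi\in\mathcal{D}(\mathbb{R}^n)}\operatorname{Im}A(\phi)$.
   Context: $X$ is a complex Banach space, $L(X)$ the bounded operators on $X$, $e_X$ the identity. $\mathcal{D}(\mathbb{R}^n)=C_c^\infty(\mathbb{R}^n)$ (complex-valued) with its usual topology. A linear map $A:\mathcal{D}(\mathbb{R}^n)\to L(X)$ is continuous if $A(\phi_j)\to 0$ in operator norm whenever $\phi_j\to0$ in $\mathcal{D}(\mathbb{R}^n)$, and multiplicative if $A(\phi\psi)=A(\phi)A(\psi)$. A hyperoperator on $\mathbb{R}^n$ is a continuous linear multiplicative map $A:\mathcal{D}(\mathbb{R}^n)\to L(X)$ such that (i) $D_A:=\bigcup_{\phi}\operatorname{Im}A(\phi)$ is dense in $X$ and (ii) $\bigcap_\phi\operatorname{Ker}A(\phi)=\{0\}$. A sequence $\chi_N\in\mathcal{D}(\mathbb{R}^n)$ is exhausting if $0\le\chi_N\le1$, $\chi_N\nearrow 1$, and the compact sets $K_N=\{\chi_N=1\}$ satisfy $K_N\subset\operatorname{int}K_{N+1}$ and $\bigcup_N K_N=\mathbb{R}^n$. *)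

theory Defs
  imports "HOL-Analysis.Analysis"
begin

text \<open>A complex Banach space is rendered
as a real Banach space type together with a complex scalar multiplication
extending the real one and compatible with the norm.\<close>

definition complex_banach :: "(complex \<Rightarrow> 'x::banach \<Rightarrow> 'x) \<Rightarrow> bool" where
  "complex_banach sm \<longleftrightarrow>
     (\<forall>r x. sm (complex_of_real r) x = r *\<^sub>R x) \<and>
     (\<forall>a b x. sm (a * b) x = sm a (sm b x)) \<and>
     (\<forall>a b x. sm (a + b) x = sm a x + sm b x) \<and>
     (\<forall>a x y. sm a (x + y) = sm a x + sm a y) \<and>
     (\<forall>a x. norm (sm a x) = cmod a * norm x)"

definition bounded_op :: "(complex \<Rightarrow> 'x::banach \<Rightarrow> 'x) \<Rightarrow> ('x \<Rightarrow> 'x) \<Rightarrow> bool" where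
  "bounded_op sm T \<longleftrightarrow> bounded_linear T \<and> (\<forall>c x. T (sm c x) = sm c (T x))"

definition partial_deriv :: "'n::finite \<Rightarrow> (real^'n \<Rightarrow> complex) \<Rightarrow> real^'n \<Rightarrow> complex" where
  "partial_deriv i f x = frechet_derivative f (at x) (axis i 1)"

fun iter_pd :: "'n::finite list \<Rightarrow> (real^'n \<Rightarrow> complex) \<Rightarrow> real^'n \<Rightarrow> complex" where
  "iter_pd [] f = f"
| "iter_pd (i # is) f = partial_deriv i (iter_pd is f)"

definition smooth_fun :: "(real^'n::finite \<Rightarrow> complex) \<Rightarrow> bool" where
  "smooth_fun f \<longleftrightarrow> (\<forall>is x. iter_pd is f differentiable (at x))"

definition tsupp :: "(real^'n::finite \<Rightarrow> complex) \<Rightarrow> (real^'n) set" where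
  "tsupp f = closure {x. f x \<noteq> 0}"

definition test_fun :: "(real^'n::finite \<Rightarrow> complex) \<Rightarrow> bool" where
  "test_fun f \<longleftrightarrow> smooth_fun f \<and> compact (tsupp f)"

definition D_tendsto_zero :: "(nat \<Rightarrow> real^'n::finite \<Rightarrow> complex) \<Rightarrow> bool" where
  "D_tendsto_zero \<phi> \<longleftrightarrow> (\<forall>j. test_fun (\<phi> j)) \<and>
     (\<exists>K. compact K \<and> (\<forall>j. tsupp (\<phi> j) \<subseteq> K)) \<and>
     (\<forall>is e. e > 0 \<longrightarrow> (\<forall>\<^sub>F j in sequentially. \<forall>x. cmod (iter_pd is (\<phi> j) x) < e))"

definition hyperoperator ::
  "(complex \<Rightarrow> 'x::banach \<Rightarrow> 'x) \<Rightarrow> ((real^'n::finite \<Rightarrow> complex) \<Rightarrow> 'x \<Rightarrow> 'x) \<Rightarrow> bool" where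
  "hyperoperator sm A \<longleftrightarrow>
     (\<forall>\<phi>. test_fun \<phi> \<longrightarrow> bounded_op sm (A \<phi>)) \<and>
     (\<forall>\<phi> \<psi>. test_fun \<phi> \<longrightarrow> test_fun \<psi> \<longrightarrow> A (\<lambda>x. \<phi> x + \<psi> x) = (\<lambda>v. A \<phi> v + A \<psi> v)) \<and>
     (\<forall>c \<phi>. test_fun \<phi> \<longrightarrow> A (\<lambda>x. c * \<phi> x) = (\<lambda>v. sm c (A \<phi> v))) \<and>
     (\<forall>\<phi> \<psi>. test_fun \<phi> \<longrightarrow> test_fun \<psi> \<longrightarrow> A (\<lambda>x. \<phi> x * \<psi> x) = A \<phi> \<circ> A \<psi>) \<and>
     (\<forall>\<phi>s. D_tendsto_zero \<phi>s \<longrightarrow> (\<lambda>j. onorm (A (\<phi>s j))) \<longlonglongrightarrow> 0) \<and>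
     closure (\<Union>{range (A \<phi>) | \<phi>. test_fun \<phi>}) = UNIV \<and>
     (\<Inter>{{v. A \<phi> v = 0} | \<phi>. test_fun \<phi>}) = {0}"

definition D_A :: "((real^'n::finite \<Rightarrow> complex) \<Rightarrow> 'x \<Rightarrow> 'x) \<Rightarrow> 'x set" where
  "D_A A = \<Union>{range (A \<phi>) | \<phi>. test_fun \<phi>}"

definition exhausting :: "(nat \<Rightarrow> real^'n::finite \<Rightarrow> complex) \<Rightarrow> bool" where
  "exhausting chi \<longleftrightarrow>
     (\<forall>N. test_fun (chi N)) \<and>
     (\<forall>N x. chi N x \<in> complex_of_real ` {0..1}) \<and>
     (\<forall>N x. Re (chi N x) \<le> Re (chi (Suc N) x)) \<and>
     (\<forall>x. (\<lambda>N. chi N x) \<longlonglongrightarrow> 1) \<and>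
     (\<forall>N. compact {x. chi N x = 1}) \<and>
     (\<forall>N. {x. chi N x = 1} \<subseteq> interior {x. chi (Suc N) x = 1}) \<and>
     (\<Union>N. {x. chi N x = 1}) = UNIV"

end

theory Submission
  imports Defs
begin

text \<open>The support of a test function \<open>\<phi>\<close> is compact, and the interiors of the level sets
\<open>K\<^sub>N = {\<chi>\<^sub>N = 1}\<close> form an increasing open cover of \<open>\<real>\<^sup>n\<close>, so \<open>tsupp \<phi> \<subseteq> K\<^sub>M\<close> for some \<open>M\<close>.
Then \<open>\<chi>\<^sub>M \<phi> = \<phi>\<close>, and multiplicativity gives \<open>A \<phi> = A \<chi>\<^sub>M \<circ> A \<phi>\<close>, so the image of \<open>A \<phi>\<close> lies
in the image of \<open>A \<chi>\<^sub>M\<close>.\<close>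

lemma compact_subset_incseq_open_Union:
  fixes U :: "nat \<Rightarrow> 'a::topological_space set"
  assumes "compact S" and "\<And>N. open (U N)" and "incseq U" and "S \<subseteq> (\<Union>N. U N)"
  obtains M where "S \<subseteq> U M"
proof -
  obtain G where "finite G" and G: "S \<subseteq> (\<Union>N\<in>G. U N)"
    using compactE_image[OF assms(1,2,4)] by metis
  have "U N \<subseteq> U (Max (insert 0 G))" if "N \<in> G" for N
    using \<open>finite G\<close> that by (intro monoD[OF \<open>incseq U\<close>]) simp
  then have "S \<subseteq> U (Max (insert 0 G))"
    using G by blast
  then show thesis
    by (rule that)
qed

lemma compact_subset_exhaustion:
  fixes K :: "nat \<Rightarrow> 'a::topological_space set"
  assumes "compact S" and K_interior: "\<And>N. K N \<subseteq> interior (K (Suc N))"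
    and K_cover: "(\<Union>N. K N) = UNIV"
  obtains M where "S \<subseteq> K M"
proof -
  have "x \<in> (\<Union>N. interior (K N))" for x
  proof -
    obtain N where "x \<in> K N"
      using K_cover by (metis UNIV_I UN_E)
    then show ?thesis
      using K_interior by blast
  qed
  then have "S \<subseteq> (\<Union>N. interior (K N))"
    by blast
  moreover have "K N \<subseteq> K (Suc N)" for N
    using K_interior interior_subset by blast
  then have "incseq (\<lambda>N. interior (K N))"
    by (intro incseq_SucI interior_mono)
  ultimately obtain M where "S \<subseteq> interior (K M)"
    using compact_subset_incseq_open_Union[OF \<open>compact S\<close> open_interior] by blast
  then show thesis
    using that interior_subset by blast
qed

lemma cutoff_mult_eq_self:
  assumes "tsupp \<phi> \<subseteq> {x. \<psi> x = 1}"
  shows "(\<lambda>x. \<psi> x * \<phi> x) = \<phi>"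
proof
  fix x
  show "\<psi> x * \<phi> x = \<phi> x"
  proof (cases "\<phi> x = 0")
    case False
    then have "x \<in> tsupp \<phi>"
      unfolding tsupp_def by (simp add: closure_subset[THEN subsetD])
    with assms have "\<psi> x = 1"
      by blast
    then show ?thesis
      by simp
  qed simp
qed

lemma hyperoperator_mult:
  assumes "hyperoperator sm A" and "test_fun \<phi>" and "test_fun \<psi>"
  shows "A (\<lambda>x. \<phi> x * \<psi> x) = A \<phi> \<circ> A \<psi>"
  using assms(1) unfolding hyperoperator_def by (elim conjE) (simp add: assms(2,3))

lemma range_hyperoperator_subset_cutoff:
  assumes "hyperoperator sm A" and "test_fun \<psi>" and "test_fun \<phi>"
    and "tsupp \<phi> \<subseteq> {x. \<psi> x = 1}"
  shows "range (A \<phi>) \<subseteq> range (A \<psi>)"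
proof -
  have "A \<phi> = A \<psi> \<circ> A \<phi>"
    using hyperoperator_mult[OF assms(1-3)] unfolding cutoff_mult_eq_self[OF assms(4)] .
  then have "A \<phi> w = A \<psi> (A \<phi> w)" for w
    by (metis comp_apply)
  then show ?thesis
    by (metis image_subsetI rangeI)
qed

theorem lemma3p1:
  fixes sm :: "complex \<Rightarrow> 'x::banach \<Rightarrow> 'x"
    and A :: "(real^'n::finite \<Rightarrow> complex) \<Rightarrow> 'x \<Rightarrow> 'x"
    and chi :: "nat \<Rightarrow> real^'n \<Rightarrow> complex"
  assumes "complex_banach sm"
    and "hyperoperator sm A"
    and "exhausting chi"
  shows "(\<Union>N. range (A (chi N))) = D_A A"
proof
  have chi_test: "test_fun (chi N)" for N
    using \<open>exhausting chi\<close> unfolding exhausting_def by blast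
  then show "(\<Union>N. range (A (chi N))) \<subseteq> D_A A"
    unfolding D_A_def by blast
  have chi_interior: "{x. chi N x = 1} \<subseteq> interior {x. chi (Suc N) x = 1}" for N
    using \<open>exhausting chi\<close> unfolding exhausting_def by blast
  have chi_cover: "(\<Union>N. {x. chi N x = 1}) = UNIV"
    using \<open>exhausting chi\<close> unfolding exhausting_def by (elim conjE)
  show "D_A A \<subseteq> (\<Union>N. range (A (chi N)))"
  proof
    fix v
    assume "v \<in> D_A A"
    then obtain \<phi> where \<phi>: "test_fun \<phi>" and "v \<in> range (A \<phi>)"
      unfolding D_A_def by blast
    have "compact (tsupp \<phi>)"
      using \<phi> unfolding test_fun_def by blast
    then obtain M where "tsupp \<phi> \<subseteq> {x. chi M x = 1}"
      by (rule compact_subset_exhaustion[where K = "\<lambda>N. {x. chi N x = 1}", OF _ chi_interior chi_cover])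
    then have "range (A \<phi>) \<subseteq> range (A (chi M))"
      by (rule range_hyperoperator_subset_cutoff[OF \<open>hyperoperator sm A\<close> chi_test \<phi>])
    with \<open>v \<in> range (A \<phi>)\<close> show "v \<in> (\<Union>N. range (A (chi N)))"
      by blast
  qed
qed

end
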